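(* Let $V$ be a finite nonempty set and $f:\{0,1\}^V\to\{0,1\}^V$ an and-net, and let $C$ be a signed digraph. Then $f$ has a circular subnetwork whose interaction graph is $C$ if and only if $C$ is a cycle of $G(f)$ that has no chord and no delocalizing vertex in $G(f)$.
   Context: For nonempty $I\subseteq V$ and $z\in\{0,1\}^{V\setminus I}$, the subnetwork of $f$ induced by $z$ is $h:\{0,1\}^I\to\{0,1\}^I$ with $h(x|_I)=f(x)|_I$ for all $x$ whose restriction to $V\setminus I$ is $z$. For a network $g$ on $W$ and $x^{j\alpha}$ the point equal to $x$ except its $j$-component is $\alpha$, the (global) interaction graph $G(g)$ is the signed digraph on $W$ with a positive (resp. negative) arc from $j$ to $i$ iff $g_i(x^{j1})-g_i(x^{j0})=1$ (resp. $=-1$) for at least one $x$. $f$ is an and-net if $G(f)$ has at most one arc from $j$ to $i$ for all $i,j$ and for every $i$ and $x$: $f_i(x)=1$ iff $G(f)$ has no positive arc $j\to i$ with $x_j=0$ and no negative arc $j\to i$ with $x_j=1$. A cycle is a subgraph with at most one arc between any ordered pair whose underlying unsigned digraph is a directed cycle; positive (negative) if it has an even (odd) number of negative arcs. $g$ is circular if $G(g)$ itself is a cycle through all vertices of $W$. A cycle $C$ of $G$ has no chord if its underlying unsigned digraph is an induced subgraph of the underlying unsigned digraph of $G$. A vertex $v$ (possibly on $C$) is a delocalizing vertex of $C$ in $G$ if $G$ has a positive arc from $v$ to a vertex of $C$ and a negative arc from $v$ to a different vertex of $C$. *)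

theory Defs
  imports Main
begin

(* Boolean configurations on a carrier set W: x :: 'v => bool, with x v = False outside W
   (canonical representative of an element of {0,1}^W; True = 1, False = 0). *)
definition conf :: "'v set \<Rightarrow> ('v \<Rightarrow> bool) set" where
  "conf W = {x. \<forall>v. v \<notin> W \<longrightarrow> x v = False}"

(* A network on W is a map g :: ('v => bool) => ('v => bool); only its values on conf W
   and at components in W are relevant. *)

datatype sign = Pos | Neg

(* signed digraph: (vertex set, set of signed arcs (j, s, i) meaning an arc j -> i of sign s) *)
type_synonym 'v sdigraph = "'v set \<times> ('v \<times> sign \<times> 'v) set"

definition verts :: "'v sdigraph \<Rightarrow> 'v set" where "verts G = fst G"
definition arcs :: "'v sdigraph \<Rightarrow> ('v \<times> sign \<times> 'v) set" where "arcs G = snd G"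

definition ig :: "'v set \<Rightarrow> (('v \<Rightarrow> bool) \<Rightarrow> ('v \<Rightarrow> bool)) \<Rightarrow> 'v sdigraph" where
  "ig W g = (W, {(j, s, i). j \<in> W \<and> i \<in> W \<and>
      (\<exists>x \<in> conf W.
         (s = Pos \<and> g (x(j := False)) i = False \<and> g (x(j := True)) i = True) \<or>
         (s = Neg \<and> g (x(j := False)) i = True \<and> g (x(j := True)) i = False))})"

definition and_net :: "'v set \<Rightarrow> (('v \<Rightarrow> bool) \<Rightarrow> ('v \<Rightarrow> bool)) \<Rightarrow> bool" where
  "and_net V f \<longleftrightarrow>
     (\<forall>j i s s'. (j, s, i) \<in> arcs (ig V f) \<and> (j, s', i) \<in> arcs (ig V f) \<longrightarrow> s = s') \<and>
     (\<forall>i \<in> V. \<forall>x \<in> conf V.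
        f x i \<longleftrightarrow> \<not> (\<exists>j. (j, Pos, i) \<in> arcs (ig V f) \<and> x j = False) \<and>
                   \<not> (\<exists>j. (j, Neg, i) \<in> arcs (ig V f) \<and> x j = True))"

definition subnet :: "'v set \<Rightarrow> (('v \<Rightarrow> bool) \<Rightarrow> ('v \<Rightarrow> bool)) \<Rightarrow> 'v set \<Rightarrow> ('v \<Rightarrow> bool)
                      \<Rightarrow> (('v \<Rightarrow> bool) \<Rightarrow> ('v \<Rightarrow> bool))" where
  "subnet V f I z = (\<lambda>y v. if v \<in> I then f (\<lambda>u. if u \<in> I then y u else z u) v else False)"

definition uarcs :: "'v sdigraph \<Rightarrow> ('v \<times> 'v) set" where
  "uarcs G = {(j, i). \<exists>s. (j, s, i) \<in> arcs G}"

(* unsigned digraph (U, E) is a directed cycle (length >= 1, loops allowed as length 1) *)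
definition directed_cycle :: "'v set \<Rightarrow> ('v \<times> 'v) set \<Rightarrow> bool" where
  "directed_cycle U E \<longleftrightarrow> (\<exists>(n::nat) p. n \<ge> 1 \<and> bij_betw p {0..<n} U \<and>
       E = {(p k, p ((k + 1) mod n)) | k. k < n})"

definition simple_sd :: "'v sdigraph \<Rightarrow> bool" where
  "simple_sd G \<longleftrightarrow> (\<forall>j i s s'. (j, s, i) \<in> arcs G \<and> (j, s', i) \<in> arcs G \<longrightarrow> s = s')"

definition is_cycle_of :: "'v sdigraph \<Rightarrow> 'v sdigraph \<Rightarrow> bool" where
  "is_cycle_of C G \<longleftrightarrow> verts C \<subseteq> verts G \<and> arcs C \<subseteq> arcs G \<and> simple_sd C \<and>
      directed_cycle (verts C) (uarcs C)"

definition circular :: "'v set \<Rightarrow> (('v \<Rightarrow> bool) \<Rightarrow> ('v \<Rightarrow> bool)) \<Rightarrow> bool" where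
  "circular W g \<longleftrightarrow> simple_sd (ig W g) \<and> directed_cycle W (uarcs (ig W g))"

definition no_chord :: "'v sdigraph \<Rightarrow> 'v sdigraph \<Rightarrow> bool" where
  "no_chord C G \<longleftrightarrow> (\<forall>j \<in> verts C. \<forall>i \<in> verts C. (j, i) \<in> uarcs G \<longrightarrow> (j, i) \<in> uarcs C)"

definition delocalizing :: "'v \<Rightarrow> 'v sdigraph \<Rightarrow> 'v sdigraph \<Rightarrow> bool" where
  "delocalizing v C G \<longleftrightarrow> v \<in> verts G \<and>
     (\<exists>a b. a \<in> verts C \<and> b \<in> verts C \<and> a \<noteq> b \<and> (v, Pos, a) \<in> arcs G \<and> (v, Neg, b) \<in> arcs G)"

end

(* In an and-net every component is a conjunction of literals, one for each in-neighbour.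
   Fixing the vertices outside I to z, component i of the subnetwork is the conjunction of its
   literals from inside I, guarded by the constant "z satisfies all literals of i from outside I".
   Hence the interaction graph of the subnetwork consists of the arcs of G(f) inside I whose head
   has all its external literals satisfied by z.  For a circular subnetwork every vertex of the
   cycle has an in-arc, so all external literals are satisfied: the cycle is induced, and a
   delocalizing vertex would either have two out-arcs on the cycle or need z to be both 0 and 1.
   Conversely, for a chordless cycle without delocalizing vertex, setting each outside vertex to 1
   exactly when it has a positive arc into the cycle satisfies every external literal. *)

theory Submission
  imports Defs
begin

fun literal :: "sign \<Rightarrow> bool \<Rightarrow> bool" where
  "literal Pos b = b"
| "literal Neg b = (\<not> b)"

lemma verts_ig [simp]: "verts (ig W g) = W"
  unfolding verts_def ig_def by simp

lemma sdigraph_eqI: "verts G = verts H \<Longrightarrow> arcs G = arcs H \<Longrightarrow> G = H"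
  unfolding verts_def arcs_def by (simp add: prod_eq_iff)

lemma directed_cycle_has_in_arc:
  assumes "directed_cycle U E" "i \<in> U" shows "\<exists>j. (j, i) \<in> E"
proof -
  obtain n p where n: "(n::nat) \<ge> 1" and b: "bij_betw p {0..<n} U"
    and E: "E = {(p k, p ((k + 1) mod n)) | k. k < n}"
    using assms(1) unfolding directed_cycle_def by blast
  obtain k where k: "k < n" "i = p k" using b assms(2) unfolding bij_betw_def by auto
  show ?thesis
  proof (cases k)
    case 0
    have "(p (n - 1), p ((n - 1 + 1) mod n)) \<in> E" using E n by auto
    then show ?thesis using 0 k n by auto
  next
    case (Suc m)
    have "(p m, p ((m + 1) mod n)) \<in> E" using E k Suc by auto
    then show ?thesis using Suc k by auto
  qed
qed

lemma directed_cycle_arcs_subset: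
  assumes "directed_cycle U E" shows "E \<subseteq> U \<times> U"
proof -
  obtain n p where n: "(n::nat) \<ge> 1" and b: "bij_betw p {0..<n} U"
    and E: "E = {(p k, p ((k + 1) mod n)) | k. k < n}"
    using assms unfolding directed_cycle_def by blast
  have "p k \<in> U" if "k < n" for k using b that unfolding bij_betw_def by auto
  then show ?thesis using E n by fastforce
qed

lemma directed_cycle_out_unique:
  assumes "directed_cycle U E" "(v, a) \<in> E" "(v, b) \<in> E" shows "a = b"
proof -
  obtain n :: nat and p where b: "bij_betw p {0..<n} U"
    and E: "E = {(p k, p ((k + 1) mod n)) | k. k < n}"
    using assms(1) unfolding directed_cycle_def by blast
  obtain k where k: "k < n" "v = p k" "a = p ((k + 1) mod n)" using assms(2) E by auto
  obtain k' where k': "k' < n" "v = p k'" "b = p ((k' + 1) mod n)" using assms(3) E by auto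
  have "k = k'" using k k' b unfolding bij_betw_def by (metis atLeastLessThan_iff le0 inj_onD)
  then show ?thesis using k k' by simp
qed

lemma directed_cycle_nonempty:
  assumes "directed_cycle U E" shows "U \<noteq> {}"
proof -
  obtain n p where "(n::nat) \<ge> 1" and "bij_betw p {0..<n} U"
    using assms unfolding directed_cycle_def by blast
  then have "p 0 \<in> U" unfolding bij_betw_def by force
  then show ?thesis by auto
qed

lemma in_arcs_ig_iff:
  "(j, s, i) \<in> arcs (ig W g) \<longleftrightarrow>
     j \<in> W \<and> i \<in> W \<and> (\<exists>x \<in> conf W. \<forall>b. g (x(j := b)) i = literal s b)"
  unfolding ig_def arcs_def by (cases s) (auto simp: all_bool_eq)

lemma arcs_ig_endpoints:
  assumes "(j, s, i) \<in> arcs (ig W g)" shows "j \<in> W" "i \<in> W"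
  using assms by (simp_all add: in_arcs_ig_iff)

lemma and_net_sign_unique:
  "and_net V f \<Longrightarrow> (j, s, i) \<in> arcs (ig V f) \<Longrightarrow> (j, s', i) \<in> arcs (ig V f) \<Longrightarrow> s = s'"
  unfolding and_net_def by blast

lemma all_sign: "(\<forall>s. P s) \<longleftrightarrow> P Pos \<and> P Neg"
  by (metis (full_types) sign.exhaust)

definition inputs_satisfied :: "'v sdigraph \<Rightarrow> 'v set \<Rightarrow> ('v \<Rightarrow> bool) \<Rightarrow> 'v \<Rightarrow> bool" where
  "inputs_satisfied G U x i \<longleftrightarrow> (\<forall>k s. (k, s, i) \<in> arcs G \<and> k \<in> U \<longrightarrow> literal s (x k))"

lemma and_net_apply:
  assumes "and_net V f" "i \<in> V" "x \<in> conf V"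
  shows "f x i \<longleftrightarrow> inputs_satisfied (ig V f) UNIV x i"
proof -
  have "f x i \<longleftrightarrow> \<not> (\<exists>j. (j, Pos, i) \<in> arcs (ig V f) \<and> x j = False) \<and>
                   \<not> (\<exists>j. (j, Neg, i) \<in> arcs (ig V f) \<and> x j = True)"
    using assms unfolding and_net_def by (meson conjunct2 bspec)
  then show ?thesis
    by (simp add: inputs_satisfied_def all_sign all_conj_distrib)
qed

lemma in_arcs_ig_conjunction_iff:
  assumes i: "i \<in> W"
    and g: "\<And>x. x \<in> conf W \<Longrightarrow> g x i \<longleftrightarrow> c \<and> (\<forall>(k, s) \<in> A. literal s (x k))"
    and A_in: "\<And>k s. (k, s) \<in> A \<Longrightarrow> k \<in> W"
    and A_unique: "\<And>k s s'. (k, s) \<in> A \<Longrightarrow> (k, s') \<in> A \<Longrightarrow> s = s'"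
  shows "(j, s, i) \<in> arcs (ig W g) \<longleftrightarrow> c \<and> (j, s) \<in> A"
proof
  assume "(j, s, i) \<in> arcs (ig W g)"
  then obtain x where j: "j \<in> W" and x: "x \<in> conf W"
    and flip: "\<And>b. g (x(j := b)) i = literal s b"
    unfolding in_arcs_ig_iff by blast
  define b where "b = literal s True"
  have xb: "x(j := b') \<in> conf W" for b' using x j unfolding conf_def by auto
  have true: "c \<and> (\<forall>(k, s') \<in> A. literal s' ((x(j := b)) k))"
    using g[OF xb] flip[of b] by (cases s) (simp_all add: b_def)
  have "\<not> g (x(j := \<not> b)) i" using flip[of "\<not> b"] by (cases s) (simp_all add: b_def)
  then obtain k s' where k: "(k, s') \<in> A" and fails: "\<not> literal s' ((x(j := \<not> b)) k)"
    using g[OF xb] true by blast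
  have "k = j"
    using true k fails by (cases "k = j") auto
  then have "s' = s" using fails by (cases s; cases s') (simp_all add: b_def)
  then show "c \<and> (j, s) \<in> A" using true k \<open>k = j\<close> by blast
next
  assume c: "c \<and> (j, s) \<in> A"
  define x where "x k \<longleftrightarrow> (k, Pos) \<in> A" for k
  have x: "x \<in> conf W" using A_in unfolding x_def conf_def by blast
  have others: "literal s' (x k)" if "(k, s') \<in> A" for k s'
    using that A_unique[OF that(1), of Pos] unfolding x_def by (cases s') auto
  have "g (x(j := b)) i = literal s b" for b
  proof -
    have "x(j := b) \<in> conf W" using x c A_in unfolding conf_def by auto
    moreover have "(\<forall>(k, s') \<in> A. literal s' ((x(j := b)) k)) \<longleftrightarrow> literal s b"
      using c others A_unique by fastforce
    ultimately show ?thesis using g c by blast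
  qed
  then show "(j, s, i) \<in> arcs (ig W g)"
    unfolding in_arcs_ig_iff using x A_in c i by blast
qed

lemma subnet_apply_and_net:
  assumes f: "and_net V f" and IV: "I \<subseteq> V" and z: "z \<in> conf (V - I)"
    and i: "i \<in> I" and y: "y \<in> conf I"
  shows "subnet V f I z y i \<longleftrightarrow> inputs_satisfied (ig V f) (- I) z i \<and>
    (\<forall>(k, s) \<in> {(k, s). (k, s, i) \<in> arcs (ig V f) \<and> k \<in> I}. literal s (y k))"
proof -
  let ?x = "\<lambda>u. if u \<in> I then y u else z u"
  have x: "?x \<in> conf V" using IV y z unfolding conf_def by auto
  have "subnet V f I z y i = f ?x i" using i unfolding subnet_def by simp
  also have "\<dots> \<longleftrightarrow> inputs_satisfied (ig V f) UNIV ?x i"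
    using i IV by (intro and_net_apply[OF f _ x]) auto
  finally have "subnet V f I z y i \<longleftrightarrow> inputs_satisfied (ig V f) UNIV ?x i" .
  then show ?thesis unfolding inputs_satisfied_def by auto
qed

lemma in_arcs_ig_subnet_iff:
  assumes f: "and_net V f" and IV: "I \<subseteq> V" and z: "z \<in> conf (V - I)"
  shows "(j, s, i) \<in> arcs (ig I (subnet V f I z)) \<longleftrightarrow>
    j \<in> I \<and> i \<in> I \<and> (j, s, i) \<in> arcs (ig V f) \<and> inputs_satisfied (ig V f) (- I) z i"
proof (cases "i \<in> I")
  case True
  show ?thesis
  proof (subst in_arcs_ig_conjunction_iff)
    show "\<And>y. y \<in> conf I \<Longrightarrow> subnet V f I z y i \<longleftrightarrow> inputs_satisfied (ig V f) (- I) z i \<and>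
      (\<forall>(k, s) \<in> {(k, s). (k, s, i) \<in> arcs (ig V f) \<and> k \<in> I}. literal s (y k))"
      using subnet_apply_and_net[OF f IV z True] .
  qed (use True and_net_sign_unique[OF f] in auto)
qed (auto dest: arcs_ig_endpoints)

lemma circular_subnet_inputs_satisfied:
  assumes f: "and_net V f" and IV: "I \<subseteq> V" and z: "z \<in> conf (V - I)"
    and circ: "circular I (subnet V f I z)" and i: "i \<in> I"
  shows "inputs_satisfied (ig V f) (- I) z i"
proof -
  have "directed_cycle I (uarcs (ig I (subnet V f I z)))" using circ unfolding circular_def ..
  then obtain j where "(j, i) \<in> uarcs (ig I (subnet V f I z))"
    using i by (blast dest: directed_cycle_has_in_arc)
  then obtain s where "(j, s, i) \<in> arcs (ig I (subnet V f I z))" unfolding uarcs_def by auto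
  then show ?thesis unfolding in_arcs_ig_subnet_iff[OF f IV z] by blast
qed

lemma circular_subnet_chordless_cycle:
  assumes f: "and_net V f" and IV: "I \<subseteq> V" and z: "z \<in> conf (V - I)"
    and circ: "circular I (subnet V f I z)"
  defines "C \<equiv> ig I (subnet V f I z)"
  shows "is_cycle_of C (ig V f) \<and> no_chord C (ig V f) \<and> \<not> (\<exists>v. delocalizing v C (ig V f))"
proof (intro conjI)
  have arcs_C: "(j, s, i) \<in> arcs C \<longleftrightarrow> j \<in> I \<and> i \<in> I \<and> (j, s, i) \<in> arcs (ig V f)" for j s i
    unfolding C_def in_arcs_ig_subnet_iff[OF f IV z]
    using circular_subnet_inputs_satisfied[OF f IV z circ] by blast
  have verts_C: "verts C = I" unfolding C_def by simp
  have cycle: "directed_cycle I (uarcs C)" using circ unfolding circular_def C_def by simp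
  show "is_cycle_of C (ig V f)"
    unfolding is_cycle_of_def
  proof (intro conjI)
    show "verts C \<subseteq> verts (ig V f)" using verts_C IV by simp
    show "arcs C \<subseteq> arcs (ig V f)" using arcs_C by auto
    show "simple_sd C" unfolding simple_sd_def using arcs_C and_net_sign_unique[OF f] by blast
    show "directed_cycle (verts C) (uarcs C)" using cycle verts_C by simp
  qed
  show "no_chord C (ig V f)"
    unfolding no_chord_def uarcs_def verts_C using arcs_C by auto
  show "\<not> (\<exists>v. delocalizing v C (ig V f))"
  proof
    assume "\<exists>v. delocalizing v C (ig V f)"
    then obtain v a b where a: "a \<in> I" and b: "b \<in> I" and "a \<noteq> b"
      and pos: "(v, Pos, a) \<in> arcs (ig V f)" and neg: "(v, Neg, b) \<in> arcs (ig V f)"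
      unfolding delocalizing_def verts_C by blast
    show False
    proof (cases "v \<in> I")
      case True
      then have "(v, a) \<in> uarcs C" "(v, b) \<in> uarcs C"
        using arcs_C a b pos neg unfolding uarcs_def by blast+
      then show False using directed_cycle_out_unique[OF cycle] \<open>a \<noteq> b\<close> by blast
    next
      case False
      then have "literal Pos (z v)" "literal Neg (z v)"
        using circular_subnet_inputs_satisfied[OF f IV z circ] a b pos neg
        unfolding inputs_satisfied_def by blast+
      then show False by simp
    qed
  qed
qed

definition satisfying_context :: "'v sdigraph \<Rightarrow> 'v set \<Rightarrow> 'v \<Rightarrow> bool" where
  "satisfying_context G I v \<longleftrightarrow> v \<in> verts G - I \<and> (\<exists>a \<in> I. (v, Pos, a) \<in> arcs G)"

lemma satisfying_context_conf: "satisfying_context G I \<in> conf (verts G - I)"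
  unfolding satisfying_context_def conf_def by blast

lemma satisfying_context_inputs_satisfied:
  assumes f: "and_net V f" and no_deloc: "\<not> (\<exists>v. delocalizing v C (ig V f))"
    and i: "i \<in> verts C"
  shows "inputs_satisfied (ig V f) (- verts C) (satisfying_context (ig V f) (verts C)) i"
  unfolding inputs_satisfied_def
proof (intro allI impI)
  fix k s assume k: "(k, s, i) \<in> arcs (ig V f) \<and> k \<in> - verts C"
  then have "k \<in> V" by (blast dest: arcs_ig_endpoints)
  show "literal s (satisfying_context (ig V f) (verts C) k)"
  proof (cases s)
    case Pos
    then show ?thesis using k i \<open>k \<in> V\<close> unfolding satisfying_context_def by auto
  next
    case Neg
    have "(k, Pos, a) \<notin> arcs (ig V f)" if a: "a \<in> verts C" for a
    proof
      assume pos: "(k, Pos, a) \<in> arcs (ig V f)"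
      then have "a = i" using no_deloc k Neg a i \<open>k \<in> V\<close> unfolding delocalizing_def by auto
      then show False using and_net_sign_unique[OF f pos] k Neg by auto
    qed
    then show ?thesis using Neg unfolding satisfying_context_def by auto
  qed
qed

lemma chordless_cycle_ig_subnet:
  assumes f: "and_net V f" and cycle: "is_cycle_of C (ig V f)"
    and chordless: "no_chord C (ig V f)" and no_deloc: "\<not> (\<exists>v. delocalizing v C (ig V f))"
  defines "I \<equiv> verts C" and "z \<equiv> satisfying_context (ig V f) (verts C)"
  shows "ig I (subnet V f I z) = C"
proof (rule sdigraph_eqI)
  have IV: "I \<subseteq> V" using cycle unfolding is_cycle_of_def I_def by simp
  have z: "z \<in> conf (V - I)" using satisfying_context_conf[of "ig V f" I] unfolding z_def I_def by simp
  have in_I: "j \<in> I \<and> i \<in> I" if "(j, s, i) \<in> arcs C" for j s i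
    using that directed_cycle_arcs_subset cycle unfolding is_cycle_of_def uarcs_def I_def by blast
  show "verts (ig I (subnet V f I z)) = verts C" unfolding I_def by simp
  show "arcs (ig I (subnet V f I z)) = arcs C"
  proof (intro set_eqI iffI)
    fix e assume "e \<in> arcs (ig I (subnet V f I z))"
    then obtain j s i where e: "e = (j, s, i)" and "j \<in> I" "i \<in> I"
      and arc: "(j, s, i) \<in> arcs (ig V f)"
      using in_arcs_ig_subnet_iff[OF f IV z] by (cases e) blast
    then have "(j, i) \<in> uarcs C" using chordless unfolding no_chord_def uarcs_def I_def by blast
    then obtain s' where "(j, s', i) \<in> arcs C" unfolding uarcs_def by auto
    moreover have "s' = s"
      using calculation cycle and_net_sign_unique[OF f _ arc] unfolding is_cycle_of_def by blast
    ultimately show "e \<in> arcs C" using e by simp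
  next
    fix e assume eC: "e \<in> arcs C"
    obtain j s i where e: "e = (j, s, i)" by (cases e)
    have "j \<in> I" "i \<in> I" using in_I eC e by auto
    moreover have "(j, s, i) \<in> arcs (ig V f)" using cycle eC e unfolding is_cycle_of_def by auto
    moreover have "inputs_satisfied (ig V f) (- I) z i"
      using satisfying_context_inputs_satisfied[OF f no_deloc] \<open>i \<in> I\<close>
      unfolding I_def z_def by blast
    ultimately show "e \<in> arcs (ig I (subnet V f I z))"
      using in_arcs_ig_subnet_iff[OF f IV z] e by blast
  qed
qed

theorem proposition9:
  fixes V :: "'v set" and f :: "('v \<Rightarrow> bool) \<Rightarrow> ('v \<Rightarrow> bool)" and C :: "'v sdigraph"
  assumes "finite V" and "V \<noteq> {}" and "and_net V f"
  shows "(\<exists>I z. I \<noteq> {} \<and> I \<subseteq> V \<and> z \<in> conf (V - I) \<and>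
             circular I (subnet V f I z) \<and> ig I (subnet V f I z) = C)
         \<longleftrightarrow> (is_cycle_of C (ig V f) \<and> no_chord C (ig V f) \<and>
              \<not> (\<exists>v. delocalizing v C (ig V f)))"
proof
  assume "\<exists>I z. I \<noteq> {} \<and> I \<subseteq> V \<and> z \<in> conf (V - I) \<and>
             circular I (subnet V f I z) \<and> ig I (subnet V f I z) = C"
  then obtain I z where IV: "I \<subseteq> V" and z: "z \<in> conf (V - I)"
    and circ: "circular I (subnet V f I z)" and ig_eq: "ig I (subnet V f I z) = C" by blast
  show "is_cycle_of C (ig V f) \<and> no_chord C (ig V f) \<and> \<not> (\<exists>v. delocalizing v C (ig V f))"
    using circular_subnet_chordless_cycle[OF assms(3) IV z circ] unfolding ig_eq .
next
  assume chordless_cycle: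
    "is_cycle_of C (ig V f) \<and> no_chord C (ig V f) \<and> \<not> (\<exists>v. delocalizing v C (ig V f))"
  define I where "I = verts C"
  define z where "z = satisfying_context (ig V f) I"
  have "I \<noteq> {}" "I \<subseteq> V"
    using chordless_cycle directed_cycle_nonempty[of "verts C"] unfolding is_cycle_of_def I_def by auto
  moreover have "z \<in> conf (V - I)" using satisfying_context_conf[of "ig V f" I] z_def by simp
  moreover have ig_eq: "ig I (subnet V f I z) = C"
    unfolding I_def z_def using chordless_cycle by (intro chordless_cycle_ig_subnet[OF assms(3)]) auto
  moreover have "circular I (subnet V f I z)"
    unfolding circular_def ig_eq using chordless_cycle unfolding is_cycle_of_def I_def by simp
  ultimately show "\<exists>I z. I \<noteq> {} \<and> I \<subseteq> V \<and> z \<in> conf (V - I) \<and>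
             circular I (subnet V f I z) \<and> ig I (subnet V f I z) = C" by blast
qed

end
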